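(* Let $m\ge1$ and let $k_1\neq k_2$ be non-negative integers. For $k\in\{k_1,k_2\}$ let $\{f_1,\dots,f_{n(k)}\}$ be an $L^2(\mathbb{S}^m)$-orthonormal basis of the space $\mathcal{H}_k$ of spherical harmonics of order $k$ on $\mathbb{S}^m$ (restrictions to $\mathbb{S}^m$ of harmonic homogeneous polynomials of degree $k$ on $\mathbb{R}^{m+1}$), $n(k)=\dim\mathcal{H}_k$, and let $\varphi_k:\mathbb{S}^m\to\mathbb{S}^{n(k)-1}(1/\sqrt2)$ be the harmonic map $x\mapsto c(k)\,(f_1(x),\dots,f_{n(k)}(x))$, where $c(k)>0$ is the constant for which the image lies in the sphere of radius $1/\sqrt2$ centred at $0$ in $\mathbb{R}^{n(k)}$. Then the map $\varphi=\iota\circ(\varphi_{k_1},\varphi_{k_2}):\mathbb{S}^m\to\mathbb{S}^{n(k_1)+n(k_2)-1}$, with $\iota$ the canonical inclusion of $\mathbb{S}^{n(k_1)-1}(1/\sqrt2)\times\mathbb{S}^{n(k_2)-1}(1/\sqrt2)$ into the unit sphere $\mathbb{S}^{n(k_1)+n(k_2)-1}$, is proper biharmonic.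
   Context: $\mathbb{S}^n(r)$ is the round sphere of radius $r$ centred at $0$, $\mathbb{S}^m$ the unit sphere. For an orthonormal basis of $\mathcal{H}_k$ the function $\sum_i f_i^2$ is constant on $\mathbb{S}^m$, so $x\mapsto c(f_1(x),\dots,f_{n(k)}(x))$ maps into a centred round sphere (these are the standard minimal immersions). Proper biharmonic means vanishing bitension field $\tau_2(\varphi)=-\Delta\tau(\varphi)-\operatorname{trace}R^N(d\varphi\cdot,\tau(\varphi))d\varphi\cdot$ but nonvanishing tension field $\tau(\varphi)=\operatorname{trace}\nabla d\varphi$. *)

theory Defs
  imports "HOL-Analysis.Analysis"
begin

text \<open>Points and vectors of R^n are represented as functions
  nat \<Rightarrow> real, only indices i < n being relevant (the dimension varies inside
  the statement). Everything is computed extrinsically, with the spheres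
  embedded in Euclidean space; the Levi-Civita connection of a sphere and the
  pull-back connection are the tangential projections of ambient directional
  derivatives; functions/sections on the sphere are differentiated through
  their 0-homogeneous extension to R^d minus the origin.\<close>

definition ip :: "nat \<Rightarrow> (nat \<Rightarrow> real) \<Rightarrow> (nat \<Rightarrow> real) \<Rightarrow> real" where
  "ip n u v = (\<Sum>i<n. u i * v i)"

definition unitvec :: "nat \<Rightarrow> nat \<Rightarrow> real" where
  "unitvec j = (\<lambda>i. if i = j then 1 else 0)"

definition sph :: "nat \<Rightarrow> real \<Rightarrow> (nat \<Rightarrow> real) set" where
  "sph n r = {x. (\<forall>i\<ge>n. x i = 0) \<and> ip n x x = r ^ 2}"

definition ptan :: "nat \<Rightarrow> (nat \<Rightarrow> real) \<Rightarrow> (nat \<Rightarrow> real) \<Rightarrow> (nat \<Rightarrow> real)" where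
  "ptan n y v = (\<lambda>i. v i - ip n v y * y i)"

definition partial :: "nat \<Rightarrow> ((nat \<Rightarrow> real) \<Rightarrow> real) \<Rightarrow> (nat \<Rightarrow> real) \<Rightarrow> real" where
  "partial j F x = deriv (\<lambda>t. F (x(j := x j + t))) 0"

definition dirderiv :: "nat \<Rightarrow> ((nat \<Rightarrow> real) \<Rightarrow> real) \<Rightarrow> (nat \<Rightarrow> real) \<Rightarrow> (nat \<Rightarrow> real) \<Rightarrow> real" where
  "dirderiv d F x v = (\<Sum>l<d. v l * partial l F x)"

definition vdir :: "nat \<Rightarrow> ((nat \<Rightarrow> real) \<Rightarrow> (nat \<Rightarrow> real)) \<Rightarrow> (nat \<Rightarrow> real) \<Rightarrow> (nat \<Rightarrow> real) \<Rightarrow> (nat \<Rightarrow> real)" where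
  "vdir d V x v = (\<lambda>i. dirderiv d (\<lambda>z. V z i) x v)"

definition radproj :: "nat \<Rightarrow> (nat \<Rightarrow> real) \<Rightarrow> (nat \<Rightarrow> real)" where
  "radproj d x = (\<lambda>i. if i < d then x i / sqrt (ip d x x) else 0)"

definition hom0 :: "nat \<Rightarrow> ((nat \<Rightarrow> real) \<Rightarrow> 'b) \<Rightarrow> (nat \<Rightarrow> real) \<Rightarrow> 'b" where
  "hom0 d F x = F (radproj d x)"

definition dmap :: "nat \<Rightarrow> ((nat \<Rightarrow> real) \<Rightarrow> (nat \<Rightarrow> real)) \<Rightarrow> (nat \<Rightarrow> real) \<Rightarrow> (nat \<Rightarrow> real) \<Rightarrow> (nat \<Rightarrow> real)" where
  "dmap d \<phi> x v = vdir d (hom0 d \<phi>) x v"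

definition conn :: "nat \<Rightarrow> nat \<Rightarrow> ((nat \<Rightarrow> real) \<Rightarrow> (nat \<Rightarrow> real)) \<Rightarrow> ((nat \<Rightarrow> real) \<Rightarrow> (nat \<Rightarrow> real))
     \<Rightarrow> (nat \<Rightarrow> real) \<Rightarrow> (nat \<Rightarrow> real) \<Rightarrow> (nat \<Rightarrow> real)" where
  "conn d N \<phi> V x X = ptan N (\<phi> x) (vdir d (hom0 d V) x X)"

definition lc :: "nat \<Rightarrow> ((nat \<Rightarrow> real) \<Rightarrow> (nat \<Rightarrow> real)) \<Rightarrow> (nat \<Rightarrow> real) \<Rightarrow> (nat \<Rightarrow> real) \<Rightarrow> (nat \<Rightarrow> real)" where
  "lc d Y x X = ptan d x (vdir d (hom0 d Y) x X)"

text \<open>Tangent vector field on S^(d-1) extending the tangent vector Y (at a point where it is tangent).\<close>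
definition tfield :: "nat \<Rightarrow> (nat \<Rightarrow> real) \<Rightarrow> (nat \<Rightarrow> real) \<Rightarrow> (nat \<Rightarrow> real)" where
  "tfield d Y = (\<lambda>z. ptan d z Y)"

definition tr :: "nat \<Rightarrow> (nat \<Rightarrow> real) \<Rightarrow> ((nat \<Rightarrow> real) \<Rightarrow> (nat \<Rightarrow> real) \<Rightarrow> (nat \<Rightarrow> real)) \<Rightarrow> (nat \<Rightarrow> real)" where
  "tr d x B = (\<lambda>i. \<Sum>j<d. B (ptan d x (unitvec j)) (ptan d x (unitvec j)) i)"

definition sff :: "nat \<Rightarrow> nat \<Rightarrow> ((nat \<Rightarrow> real) \<Rightarrow> (nat \<Rightarrow> real)) \<Rightarrow> (nat \<Rightarrow> real)
     \<Rightarrow> (nat \<Rightarrow> real) \<Rightarrow> (nat \<Rightarrow> real) \<Rightarrow> (nat \<Rightarrow> real)" where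
  "sff d N \<phi> x X Y = (\<lambda>i. conn d N \<phi> (\<lambda>z. dmap d \<phi> z (tfield d Y z)) x X i
                            - dmap d \<phi> x (lc d (tfield d Y) x X) i)"

definition tension :: "nat \<Rightarrow> nat \<Rightarrow> ((nat \<Rightarrow> real) \<Rightarrow> (nat \<Rightarrow> real)) \<Rightarrow> (nat \<Rightarrow> real) \<Rightarrow> (nat \<Rightarrow> real)" where
  "tension d N \<phi> x = tr d x (sff d N \<phi> x)"

definition hess_sec :: "nat \<Rightarrow> nat \<Rightarrow> ((nat \<Rightarrow> real) \<Rightarrow> (nat \<Rightarrow> real)) \<Rightarrow> ((nat \<Rightarrow> real) \<Rightarrow> (nat \<Rightarrow> real))
     \<Rightarrow> (nat \<Rightarrow> real) \<Rightarrow> (nat \<Rightarrow> real) \<Rightarrow> (nat \<Rightarrow> real) \<Rightarrow> (nat \<Rightarrow> real)" where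
  "hess_sec d N \<phi> V x X Y = (\<lambda>i. conn d N \<phi> (\<lambda>z. conn d N \<phi> V z (tfield d Y z)) x X i
                                  - conn d N \<phi> V x (lc d (tfield d Y) x X) i)"

definition rough_lap :: "nat \<Rightarrow> nat \<Rightarrow> ((nat \<Rightarrow> real) \<Rightarrow> (nat \<Rightarrow> real)) \<Rightarrow> ((nat \<Rightarrow> real) \<Rightarrow> (nat \<Rightarrow> real))
     \<Rightarrow> (nat \<Rightarrow> real) \<Rightarrow> (nat \<Rightarrow> real)" where
  "rough_lap d N \<phi> V x = (\<lambda>i. - tr d x (hess_sec d N \<phi> V x) i)"

text \<open>Riemann curvature tensor of the unit sphere S^(N-1) (sectional curvature 1),
  with the convention R(X,Y) = [nabla_X, nabla_Y] - nabla_[X,Y].\<close>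
definition curv_sph :: "nat \<Rightarrow> (nat \<Rightarrow> real) \<Rightarrow> (nat \<Rightarrow> real) \<Rightarrow> (nat \<Rightarrow> real) \<Rightarrow> (nat \<Rightarrow> real)" where
  "curv_sph N X Y Z = (\<lambda>i. ip N Y Z * X i - ip N X Z * Y i)"

definition bitension :: "nat \<Rightarrow> nat \<Rightarrow> ((nat \<Rightarrow> real) \<Rightarrow> (nat \<Rightarrow> real)) \<Rightarrow> (nat \<Rightarrow> real) \<Rightarrow> (nat \<Rightarrow> real)" where
  "bitension d N \<phi> x = (\<lambda>i. - rough_lap d N \<phi> (tension d N \<phi>) x i
      - tr d x (\<lambda>X Y. curv_sph N (dmap d \<phi> x X) (tension d N \<phi> x) (dmap d \<phi> x Y)) i)"

definition proper_biharmonic :: "nat \<Rightarrow> nat \<Rightarrow> ((nat \<Rightarrow> real) \<Rightarrow> (nat \<Rightarrow> real)) \<Rightarrow> bool" where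
  "proper_biharmonic d N \<phi> \<longleftrightarrow>
     (\<forall>x\<in>sph d 1. \<phi> x \<in> sph N 1) \<and>
     (\<forall>x\<in>sph d 1. \<forall>i<N. bitension d N \<phi> x i = 0) \<and>
     (\<exists>x\<in>sph d 1. \<exists>i<N. tension d N \<phi> x i \<noteq> 0)"

definition multi_idx :: "nat \<Rightarrow> nat \<Rightarrow> (nat \<Rightarrow> nat) set" where
  "multi_idx d k = {\<alpha>. (\<forall>i\<ge>d. \<alpha> i = 0) \<and> (\<Sum>i<d. \<alpha> i) = k}"

definition hom_poly :: "nat \<Rightarrow> nat \<Rightarrow> ((nat \<Rightarrow> real) \<Rightarrow> real) \<Rightarrow> bool" where
  "hom_poly d k p \<longleftrightarrow> (\<exists>c. \<forall>x. p x = (\<Sum>\<alpha>\<in>multi_idx d k. c \<alpha> * (\<Prod>i<d. x i ^ \<alpha> i)))"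

definition harmonic_fun :: "nat \<Rightarrow> ((nat \<Rightarrow> real) \<Rightarrow> real) \<Rightarrow> bool" where
  "harmonic_fun d p \<longleftrightarrow> (\<forall>x. (\<Sum>j<d. partial j (partial j p) x) = 0)"

definition sph_harm :: "nat \<Rightarrow> nat \<Rightarrow> ((nat \<Rightarrow> real) \<Rightarrow> real) set" where
  "sph_harm d k = {f. \<exists>p. hom_poly d k p \<and> harmonic_fun d p \<and> (\<forall>x\<in>sph d 1. f x = p x)}"

text \<open>Integral over S^(d-1) with respect to the Riemannian measure, via the
  cone formula: int_S f d sigma = d * int_{unit ball} f(y/|y|) dy.\<close>
definition sph_integral :: "nat \<Rightarrow> ((nat \<Rightarrow> real) \<Rightarrow> real) \<Rightarrow> real" where
  "sph_integral d f = real d * (\<integral>y. indicator {y. ip d y y \<le> 1} y * f (radproj d y)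
                                    \<partial>(PiM {..<d} (\<lambda>_. lborel)))"

definition L2_ip :: "nat \<Rightarrow> ((nat \<Rightarrow> real) \<Rightarrow> real) \<Rightarrow> ((nat \<Rightarrow> real) \<Rightarrow> real) \<Rightarrow> real" where
  "L2_ip d f g = sph_integral d (\<lambda>x. f x * g x)"

definition sph_harm_onb :: "nat \<Rightarrow> nat \<Rightarrow> ((nat \<Rightarrow> real) \<Rightarrow> real) list \<Rightarrow> bool" where
  "sph_harm_onb d k fs \<longleftrightarrow>
     (\<forall>f\<in>set fs. f \<in> sph_harm d k) \<and>
     (\<forall>i<length fs. \<forall>j<length fs. L2_ip d (fs ! i) (fs ! j) = (if i = j then 1 else 0)) \<and>
     (\<forall>f\<in>sph_harm d k. \<exists>a. \<forall>x\<in>sph d 1. f x = (\<Sum>i<length fs. a i * (fs ! i) x))"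

definition pair_map :: "real \<Rightarrow> ((nat \<Rightarrow> real) \<Rightarrow> real) list \<Rightarrow> real \<Rightarrow> ((nat \<Rightarrow> real) \<Rightarrow> real) list
     \<Rightarrow> (nat \<Rightarrow> real) \<Rightarrow> (nat \<Rightarrow> real)" where
  "pair_map c1 fs1 c2 fs2 x = (\<lambda>i. if i < length fs1 then c1 * (fs1 ! i) x
      else if i < length fs1 + length fs2 then c2 * (fs2 ! (i - length fs1)) x else 0)"

end

theory Submission
  imports Defs
begin

text \<open>The components of the map are harmonic homogeneous polynomials Q_i of degree k_i, whose
  restrictions to the sphere are eigenfunctions of the Laplacian with eigenvalue
  lambda_i = k_i (k_i + m - 1). Because each block has constant squared norm 1/2, the energy density
  |d phi|^2 = (lambda_1 + lambda_2)/2 is constant and the tension field is tau_i = sigma_i Q_i with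
  sigma = +-(lambda_2 - lambda_1)/2 on the two blocks; it is orthogonal to d phi. Hence the rough
  Laplacian and the curvature term of tau_2 are again blockwise multiples of Q_i, and they cancel,
  while k_1 \<noteq> k_2 makes lambda_1 \<noteq> lambda_2, so tau \<noteq> 0.
  All covariant derivatives are tangential projections of derivatives of 0-homogeneous extensions;
  for polynomial data they reduce to ordinary partial derivatives of the polynomials.\<close>

inductive poly_on :: "nat \<Rightarrow> ((nat \<Rightarrow> real) \<Rightarrow> real) \<Rightarrow> bool" for d where
  poly_on_const: "poly_on d (\<lambda>x. c)"
| poly_on_coord: "i < d \<Longrightarrow> poly_on d (\<lambda>x. x i)"
| poly_on_add: "poly_on d f \<Longrightarrow> poly_on d g \<Longrightarrow> poly_on d (\<lambda>x. f x + g x)"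
| poly_on_mult: "poly_on d f \<Longrightarrow> poly_on d g \<Longrightarrow> poly_on d (\<lambda>x. f x * g x)"

text \<open>partial is defined through deriv, which is junk where the restriction to a
  coordinate line is not differentiable; this predicate excludes that.\<close>
definition has_partials :: "((nat \<Rightarrow> real) \<Rightarrow> real) \<Rightarrow> bool" where
  "has_partials f \<longleftrightarrow> (\<forall>y j. ((\<lambda>t. f (y(j := y j + t))) has_real_derivative partial j f y) (at 0))"

lemma if_zero_mult [simp]: "(if P then a else 0) * (c::real) = (if P then a * c else 0)"
  by simp

lemma mult_if_zero [simp]: "(c::real) * (if P then a else 0) = (if P then c * a else 0)"
  by simp

lemma coord_line_has_derivative:
  "((\<lambda>t. (y(j := y j + t)) l) has_real_derivative (if l = j then 1 else 0)) (at t0)"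
  by (cases "l = j") (auto intro!: derivative_eq_intros)

lemma partial_eqI:
  "((\<lambda>t. f (y(j := y j + t))) has_real_derivative D) (at 0) \<Longrightarrow> partial j f y = D"
  by (simp add: partial_def DERIV_imp_deriv)

lemma has_partialsD:
  "has_partials f \<Longrightarrow> ((\<lambda>t. f (y(j := y j + t))) has_real_derivative partial j f y) (at 0)"
  by (simp add: has_partials_def)

lemma has_partialsI:
  "(\<And>y j. ((\<lambda>t. f (y(j := y j + t))) has_real_derivative partial j f y) (at 0)) \<Longrightarrow> has_partials f"
  by (simp add: has_partials_def)

lemma partial_const [simp]: "partial j (\<lambda>x. c) y = 0"
  by (rule partial_eqI) (rule DERIV_const)

lemma partial_coord [simp]: "partial j (\<lambda>x. x i) y = (if i = j then 1 else 0)"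
  by (rule partial_eqI) (rule coord_line_has_derivative)

lemma has_partials_const [simp]: "has_partials (\<lambda>x. c)"
  by (simp add: has_partials_def)

lemma has_partials_coord [simp]: "has_partials (\<lambda>x. x i)"
  by (rule has_partialsI, subst partial_coord) (rule coord_line_has_derivative)

lemma partial_add [simp]: "has_partials f \<Longrightarrow> has_partials g \<Longrightarrow>
    partial j (\<lambda>x. f x + g x) y = partial j f y + partial j g y"
  by (rule partial_eqI) (intro DERIV_add has_partialsD)

lemma has_partials_add [simp]: "has_partials f \<Longrightarrow> has_partials g \<Longrightarrow> has_partials (\<lambda>x. f x + g x)"
  by (rule has_partialsI) (auto intro!: DERIV_cong[OF DERIV_add[OF has_partialsD has_partialsD]])

lemma partial_diff [simp]: "has_partials f \<Longrightarrow> has_partials g \<Longrightarrow>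
    partial j (\<lambda>x. f x - g x) y = partial j f y - partial j g y"
  by (rule partial_eqI) (intro DERIV_diff has_partialsD)

lemma has_partials_diff [simp]: "has_partials f \<Longrightarrow> has_partials g \<Longrightarrow> has_partials (\<lambda>x. f x - g x)"
  by (rule has_partialsI) (auto intro!: DERIV_cong[OF DERIV_diff[OF has_partialsD has_partialsD]])

lemma partial_mult [simp]: "has_partials f \<Longrightarrow> has_partials g \<Longrightarrow>
    partial j (\<lambda>x. f x * g x) y = partial j f y * g y + f y * partial j g y"
  by (rule partial_eqI) (rule DERIV_cong[OF DERIV_mult'[OF has_partialsD has_partialsD]], auto)

lemma has_partials_mult [simp]: "has_partials f \<Longrightarrow> has_partials g \<Longrightarrow> has_partials (\<lambda>x. f x * g x)"
  by (rule has_partialsI) (auto intro!: DERIV_cong[OF DERIV_mult'[OF has_partialsD has_partialsD]])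

lemma partial_sum [simp]: "\<forall>a\<in>A. has_partials (f a) \<Longrightarrow>
    partial j (\<lambda>x. \<Sum>a\<in>A. f a x) y = (\<Sum>a\<in>A. partial j (f a) y)"
  by (cases "finite A") (auto intro!: partial_eqI DERIV_sum has_partialsD)

lemma has_partials_sum [simp]: "\<forall>a\<in>A. has_partials (f a) \<Longrightarrow> has_partials (\<lambda>x. \<Sum>a\<in>A. f a x)"
  by (rule has_partialsI) (cases "finite A", auto intro!: DERIV_cong[OF DERIV_sum] has_partialsD)

lemma partial_power [simp]: "has_partials f \<Longrightarrow>
    partial j (\<lambda>x. f x ^ n) y = real n * f y ^ (n - 1) * partial j f y"
  by (rule partial_eqI) (auto intro!: derivative_eq_intros has_partialsD)

lemma has_partials_power [simp]: "has_partials f \<Longrightarrow> has_partials (\<lambda>x. f x ^ n)"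
  by (rule has_partialsI) (auto intro!: derivative_eq_intros has_partialsD)

lemma partial_divide_const [simp]: "has_partials f \<Longrightarrow> partial j (\<lambda>x. f x / c) y = partial j f y / c"
  by (rule partial_eqI) (intro DERIV_cdivide has_partialsD)

lemma has_partials_divide_const [simp]: "has_partials f \<Longrightarrow> has_partials (\<lambda>x. f x / c)"
  by (rule has_partialsI) (auto intro!: DERIV_cdivide has_partialsD)

lemma partial_const_mult: "has_partials f \<Longrightarrow> partial j (\<lambda>x. c * f x) = (\<lambda>y. c * partial j f y)"
  by (rule ext) simp

lemma poly_on_has_partials: "poly_on d f \<Longrightarrow> has_partials f"
  by (induction rule: poly_on.induct) auto

lemma poly_on_diff:
  assumes "poly_on d f" "poly_on d g" shows "poly_on d (\<lambda>x. f x - g x)"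
proof -
  have "poly_on d (\<lambda>x. f x + (- 1) * g x)"
    using assms by (intro poly_on.intros)
  then show ?thesis by simp
qed

lemma poly_on_sum: "(\<And>a. a \<in> A \<Longrightarrow> poly_on d (f a)) \<Longrightarrow> poly_on d (\<lambda>x. \<Sum>a\<in>A. f a x)"
proof (induction A rule: infinite_finite_induct)
  case (insert a F)
  then show ?case using poly_on_add[of d "f a" "\<lambda>x. \<Sum>a\<in>F. f a x"] by simp
qed (simp_all add: poly_on_const)

lemma poly_on_prod: "(\<And>a. a \<in> A \<Longrightarrow> poly_on d (f a)) \<Longrightarrow> poly_on d (\<lambda>x. \<Prod>a\<in>A. f a x)"
proof (induction A rule: infinite_finite_induct)
  case (insert a F)
  then show ?case using poly_on_mult[of d "f a" "\<lambda>x. \<Prod>a\<in>F. f a x"] by simp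
qed (simp_all add: poly_on_const)

lemma poly_on_power: "poly_on d f \<Longrightarrow> poly_on d (\<lambda>x. f x ^ n)"
  by (induction n) (simp_all add: poly_on_const poly_on_mult)

lemma poly_on_partial: "poly_on d f \<Longrightarrow> poly_on d (partial j f)"
proof (induction rule: poly_on.induct)
  case (poly_on_add f g)
  then show ?case
    using poly_on_has_partials[OF poly_on_add.hyps(1)] poly_on_has_partials[OF poly_on_add.hyps(2)]
    by (simp add: poly_on.intros)
next
  case (poly_on_mult f g)
  then show ?case
    using poly_on_has_partials[OF poly_on_mult.hyps(1)] poly_on_has_partials[OF poly_on_mult.hyps(2)]
    by (simp add: poly_on.intros)
qed (simp_all add: poly_on.intros)

lemma partial_commute: "poly_on d f \<Longrightarrow> partial h (partial l f) = partial l (partial h f)"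
proof (induction rule: poly_on.induct)
  case (poly_on_add f g)
  have "has_partials f" "has_partials g" "has_partials (partial l f)" "has_partials (partial l g)"
    "has_partials (partial h f)" "has_partials (partial h g)"
    using poly_on_add.hyps by (auto intro!: poly_on_has_partials poly_on_partial)
  then show ?case using poly_on_add.IH by (simp add: fun_eq_iff)
next
  case (poly_on_mult f g)
  have "has_partials f" "has_partials g" "has_partials (partial l f)" "has_partials (partial l g)"
    "has_partials (partial h f)" "has_partials (partial h g)"
    using poly_on_mult.hyps by (auto intro!: poly_on_has_partials poly_on_partial)
  then show ?case using poly_on_mult.IH by (simp add: fun_eq_iff algebra_simps)
qed (simp_all add: fun_eq_iff)

text \<open>Partial derivatives along coordinate lines do not give a chain rule in general; for
  polynomials it follows from the sum and product rules.\<close>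
lemma poly_on_chain_rule:
  assumes "poly_on d f" and "\<And>i. i < d \<Longrightarrow> ((\<lambda>t. \<gamma> t i) has_real_derivative \<gamma>' i) (at t0)"
  shows "((\<lambda>t. f (\<gamma> t)) has_real_derivative (\<Sum>i<d. \<gamma>' i * partial i f (\<gamma> t0))) (at t0)"
  using assms
proof (induction rule: poly_on.induct)
  case (poly_on_coord i)
  then show ?case by (simp add: if_distrib[where f="\<lambda>z. _ * z"] cong: if_cong)
next
  case (poly_on_add f g)
  then show ?case
    using poly_on_has_partials[OF poly_on_add.hyps(1)] poly_on_has_partials[OF poly_on_add.hyps(2)]
    by (auto intro!: DERIV_cong[OF DERIV_add] simp: sum.distrib algebra_simps)
next
  case (poly_on_mult f g)
  then show ?case
    using poly_on_has_partials[OF poly_on_mult.hyps(1)] poly_on_has_partials[OF poly_on_mult.hyps(2)]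
    by (auto intro!: DERIV_cong[OF DERIV_mult'] simp: sum.distrib sum_distrib_left sum_distrib_right algebra_simps)
qed simp

text \<open>Forgetting the number of variables makes this usable as a side condition of simp rules.\<close>
definition poly_fun :: "((nat \<Rightarrow> real) \<Rightarrow> real) \<Rightarrow> bool" where
  "poly_fun f \<longleftrightarrow> (\<exists>d. poly_on d f)"

lemma poly_funI: "poly_on d f \<Longrightarrow> poly_fun f"
  by (auto simp: poly_fun_def)

lemma poly_fun_has_partials [simp]: "poly_fun f \<Longrightarrow> has_partials f"
  by (auto simp: poly_fun_def intro: poly_on_has_partials)

lemma poly_fun_partial [simp]: "poly_fun f \<Longrightarrow> poly_fun (partial j f)"
  by (auto simp: poly_fun_def intro: poly_on_partial)

lemma sph_ip: "x \<in> sph d r \<Longrightarrow> ip d x x = r ^ 2"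
  by (simp add: sph_def)

lemma sph_outside: "x \<in> sph d r \<Longrightarrow> d \<le> i \<Longrightarrow> x i = 0"
  by (simp add: sph_def)

lemma unitvec_in_sph: "j < d \<Longrightarrow> unitvec j \<in> sph d 1"
  by (simp add: sph_def unitvec_def ip_def)

lemma radproj_sph: "x \<in> sph d 1 \<Longrightarrow> radproj d x = x"
  by (auto simp: radproj_def sph_ip sph_outside intro!: ext)

lemma radproj_in_sph:
  assumes "ip d y y > 0" shows "radproj d y \<in> sph d 1"
proof -
  have "ip d (radproj d y) (radproj d y) = (\<Sum>i<d. y i * y i) / (sqrt (ip d y y))\<^sup>2"
    by (simp add: ip_def radproj_def sum_divide_distrib power2_eq_square)
  also have "\<dots> = 1" using assms by (simp add: ip_def)
  finally show ?thesis by (auto simp: sph_def radproj_def)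
qed

lemma poly_on_ip_self: "poly_on d (\<lambda>y. ip d y y)"
  unfolding ip_def by (intro poly_on_sum poly_on_mult poly_on_coord) auto

lemma has_partials_ip_self [simp]: "has_partials (\<lambda>y. ip d y y)"
  by (rule poly_on_has_partials[OF poly_on_ip_self])

lemma partial_ip_self [simp]: "l < d \<Longrightarrow> partial l (\<lambda>y. ip d y y) x = 2 * x l"
  unfolding ip_def by (simp add: sum.distrib)

lemma radproj_coord_line_has_derivative:
  assumes x: "x \<in> sph d 1" and l: "l < d" and i: "i < d"
  shows "((\<lambda>t. radproj d (x(l := x l + t)) i) has_real_derivative (if i = l then 1 else 0) - x i * x l) (at 0)"
proof -
  have ipx: "ip d x x = 1" using sph_ip[OF x] by simp
  have norm: "((\<lambda>t. ip d (x(l := x l + t)) (x(l := x l + t))) has_real_derivative 2 * x l) (at 0)"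
    using has_partialsD[OF has_partials_ip_self, of d x l] l by simp
  have "((\<lambda>t. (x(l := x l + t)) i / sqrt (ip d (x(l := x l + t)) (x(l := x l + t)))) has_real_derivative
      (if i = l then 1 else 0) - x i * x l) (at 0)"
    by (rule DERIV_cong[OF DERIV_divide[OF coord_line_has_derivative DERIV_chain2[OF DERIV_real_sqrt norm]]])
       (auto simp: ipx)
  then show ?thesis using i by (simp add: radproj_def)
qed

lemma partial_hom0:
  assumes x: "x \<in> sph d 1" and G: "poly_on d G" and FG: "\<forall>z\<in>sph d 1. F z = G z" and l: "l < d"
  shows "partial l (hom0 d F) x = (\<Sum>i<d. ((if i = l then 1 else 0) - x i * x l) * partial i G x)"
proof (rule partial_eqI)
  define f where "f = (\<lambda>t. ip d (x(l := x l + t)) (x(l := x l + t)))"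
  have "isCont f 0"
    unfolding f_def by (rule DERIV_isCont[OF has_partialsD[OF has_partials_ip_self]])
  moreover have "f 0 = 1" using sph_ip[OF x] by (simp add: f_def)
  ultimately have "eventually (\<lambda>t. 0 < f t) (nhds 0)"
    by (metis isCont_def order_tendstoD(1) tendsto_at_iff_tendsto_nhds zero_less_one)
  then have hom0_eq: "eventually (\<lambda>t. hom0 d F (x(l := x l + t)) = G (radproj d (x(l := x l + t)))) (nhds 0)"
    by eventually_elim (use FG radproj_in_sph in \<open>auto simp: f_def hom0_def\<close>)
  have "((\<lambda>t. G (radproj d (x(l := x l + t)))) has_real_derivative
        (\<Sum>i<d. ((if i = l then 1 else 0) - x i * x l) * partial i G (radproj d (x(l := x l + 0))))) (at 0)"
    by (rule poly_on_chain_rule[OF G radproj_coord_line_has_derivative[OF x l]])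
  then show "((\<lambda>t. hom0 d F (x(l := x l + t))) has_real_derivative
        (\<Sum>i<d. ((if i = l then 1 else 0) - x i * x l) * partial i G x)) (at 0)"
    using DERIV_cong_ev[OF refl hom0_eq refl] radproj_sph[OF x] by simp
qed

definition tan_deriv ::
    "nat \<Rightarrow> ((nat \<Rightarrow> real) \<Rightarrow> real) \<Rightarrow> (nat \<Rightarrow> real) \<Rightarrow> (nat \<Rightarrow> real) \<Rightarrow> real" where
  "tan_deriv d p Y z = (\<Sum>l<d. ptan d z Y l * partial l p z)"

lemma tan_deriv_expand:
  "tan_deriv d p Y = (\<lambda>z. \<Sum>l<d. (Y l - (\<Sum>m<d. Y m * z m) * z l) * partial l p z)"
  by (simp add: tan_deriv_def ptan_def ip_def fun_eq_iff)

lemma dirderiv_hom0: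
  assumes x: "x \<in> sph d 1" and G: "poly_on d G" and FG: "\<forall>z\<in>sph d 1. F z = G z"
  shows "dirderiv d (hom0 d F) x X = tan_deriv d G X x"
proof -
  have "dirderiv d (hom0 d F) x X = (\<Sum>l<d. \<Sum>i<d. X l * ((if i = l then 1 else 0) - x i * x l) * partial i G x)"
    unfolding dirderiv_def using partial_hom0[OF x G FG] by (simp add: sum_distrib_left mult.assoc)
  also have "\<dots> = (\<Sum>i<d. (\<Sum>l<d. X l * ((if i = l then 1 else 0) - x i * x l)) * partial i G x)"
    by (subst sum.swap) (simp add: sum_distrib_right)
  also have "\<dots> = tan_deriv d G X x"
    unfolding tan_deriv_def
  proof (rule sum.cong[OF refl])
    fix i assume i: "i \<in> {..<d}"
    have "(\<Sum>l<d. X l * ((if i = l then 1 else 0) - x i * x l)) = (\<Sum>l<d. (if i = l then X l else 0) - X l * x l * x i)"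
      by (rule sum.cong) (auto simp: algebra_simps)
    also have "\<dots> = ptan d x X i"
      using i by (simp add: sum_subtractf ip_def sum_distrib_right ptan_def)
    finally show "(\<Sum>l<d. X l * ((if i = l then 1 else 0) - x i * x l)) * partial i G x = ptan d x X i * partial i G x"
      by simp
  qed
  finally show ?thesis .
qed

lemma vdir_hom0:
  assumes x: "x \<in> sph d 1" and G: "poly_on d G" and VG: "\<forall>z\<in>sph d 1. V z i = G z"
  shows "vdir d (hom0 d V) x X i = tan_deriv d G X x"
proof -
  have "(\<lambda>z. hom0 d V z i) = hom0 d (\<lambda>z. V z i)"
    by (simp add: hom0_def fun_eq_iff)
  then show ?thesis using dirderiv_hom0[OF x G, of "\<lambda>z. V z i"] VG by (simp add: vdir_def)
qed

lemma tan_deriv_const_mult: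
  "has_partials p \<Longrightarrow> tan_deriv d (\<lambda>z. c * p z) Y x = c * tan_deriv d p Y x"
  by (simp add: tan_deriv_def sum_distrib_left algebra_simps)

lemma vdir_zero: "vdir d V x (\<lambda>_. 0) = (\<lambda>i. 0)"
  by (simp add: vdir_def dirderiv_def)

lemma ip_ptan_self:
  assumes "x \<in> sph d 1" shows "ip d (ptan d x Y) x = 0"
proof -
  have "ip d (ptan d x Y) x = ip d Y x - ip d Y x * ip d x x"
    by (simp add: ip_def ptan_def left_diff_distrib sum_subtractf sum_distrib_left mult.assoc)
  then show ?thesis using sph_ip[OF assms] by simp
qed

lemma ptan_idem: "x \<in> sph d 1 \<Longrightarrow> ptan d x (ptan d x Y) = ptan d x Y"
  using ip_ptan_self by (simp add: ptan_def[of d x "ptan d x Y"])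

lemma tan_deriv_ptan: "x \<in> sph d 1 \<Longrightarrow> tan_deriv d p (ptan d x Y) x = tan_deriv d p Y x"
  by (simp add: tan_deriv_def ptan_idem)

lemma ptan_tangent: "ip d Y x = 0 \<Longrightarrow> ptan d x Y = Y"
  by (simp add: ptan_def)

lemma ptan_sum: "(\<Sum>j\<in>J. ptan n w (v j) i) = ptan n w (\<lambda>i. \<Sum>j\<in>J. v j i) i"
  by (simp add: ptan_def ip_def sum_subtractf sum_distrib_right sum.swap[of _ J])

definition tbasis :: "nat \<Rightarrow> (nat \<Rightarrow> real) \<Rightarrow> nat \<Rightarrow> nat \<Rightarrow> real" where
  "tbasis d x j = ptan d x (unitvec j)"

lemma tr_tbasis: "tr d x B i = (\<Sum>j<d. B (tbasis d x j) (tbasis d x j) i)"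
  by (simp add: tr_def tbasis_def)

lemma tbasis_apply: "j < d \<Longrightarrow> tbasis d x j h = (if h = j then 1 else 0) - x j * x h"
  by (simp add: tbasis_def ptan_def ip_def unitvec_def)

lemma sum_tbasis_mult:
  "j < d \<Longrightarrow> (\<Sum>h<d. tbasis d x j h * a h) = a j - x j * (\<Sum>h<d. x h * a h)"
  by (simp add: tbasis_apply left_diff_distrib sum_subtractf sum_distrib_left mult.assoc)

lemma ip_tbasis_self: "x \<in> sph d 1 \<Longrightarrow> ip d (tbasis d x j) x = 0"
  by (simp add: tbasis_def ip_ptan_self)

lemma ptan_tbasis: "x \<in> sph d 1 \<Longrightarrow> ptan d x (tbasis d x j) = tbasis d x j"
  by (simp add: tbasis_def ptan_idem)

lemma sum_tbasis_sq:
  assumes x: "x \<in> sph d 1" and j: "j < d"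
  shows "(\<Sum>h<d. tbasis d x j h * tbasis d x j h) = 1 - x j * x j"
proof -
  have "(\<Sum>h<d. x h * tbasis d x j h) = 0"
    using ip_tbasis_self[OF x, of j] by (simp add: ip_def mult.commute)
  then show ?thesis using sum_tbasis_mult[OF j, of x "tbasis d x j"] tbasis_apply[OF j, of x j] by simp
qed

lemma lc_tfield_tangent:
  assumes x: "x \<in> sph d 1" and Y: "ip d Y x = 0"
  shows "lc d (tfield d Y) x X = (\<lambda>i. 0)"
proof -
  let ?c = "\<Sum>h<d. ptan d x X h * Y h"
  have Y': "(\<Sum>m<d. Y m * x m) = 0" using Y by (simp add: ip_def)
  have v: "vdir d (hom0 d (tfield d Y)) x X i = - ?c * x i" for i
  proof (cases "i < d")
    case True
    have "vdir d (hom0 d (tfield d Y)) x X i = tan_deriv d (\<lambda>z. Y i - (\<Sum>m<d. Y m * z m) * z i) X x"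
      by (rule vdir_hom0[OF x])
         (use True in \<open>auto intro!: poly_on_sum poly_on_diff poly_on_mult poly_on_const poly_on_coord
                            simp: tfield_def ptan_def ip_def\<close>)
    also have "\<dots> = (\<Sum>h<d. ptan d x X h * (- (Y h * x i)))"
      unfolding tan_deriv_def using Y' True by (intro sum.cong) auto
    finally show ?thesis by (simp add: sum_distrib_right sum_negf mult.assoc)
  next
    case False
    have "vdir d (hom0 d (tfield d Y)) x X i = tan_deriv d (\<lambda>z. Y i) X x"
      by (rule vdir_hom0[OF x]) (use False sph_outside in \<open>auto intro!: poly_on_const simp: tfield_def ptan_def\<close>)
    then show ?thesis using False sph_outside[OF x, of i] by (simp add: tan_deriv_def)
  qed
  have ipc: "ip d (\<lambda>i. - ?c * x i) x = - ?c"
    using sph_ip[OF x] by (simp add: ip_def sum_negf sum_distrib_left[symmetric] mult.assoc)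
  have vf: "vdir d (hom0 d (tfield d Y)) x X = (\<lambda>i. - ?c * x i)"
    using v by (simp add: fun_eq_iff)
  show ?thesis
    unfolding lc_def vf ptan_def[of d x "\<lambda>i. - ?c * x i"] ipc by simp
qed

lemma hom_poly_eq:
  "hom_poly d k p \<Longrightarrow> \<exists>c. p = (\<lambda>x. \<Sum>\<alpha>\<in>multi_idx d k. c \<alpha> * (\<Prod>i<d. x i ^ \<alpha> i))"
  unfolding hom_poly_def by (auto simp: fun_eq_iff)

lemma hom_poly_poly_on: "hom_poly d k p \<Longrightarrow> poly_on d p"
  by (drule hom_poly_eq)
     (auto intro!: poly_on_sum poly_on_mult poly_on_const poly_on_prod poly_on_power poly_on_coord)

lemma hom_poly_const_mult:
  assumes "hom_poly d k p" shows "hom_poly d k (\<lambda>x. c * p x)"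
proof -
  obtain a where "p = (\<lambda>x. \<Sum>\<alpha>\<in>multi_idx d k. a \<alpha> * (\<Prod>i<d. x i ^ \<alpha> i))"
    using hom_poly_eq[OF assms] by blast
  then show ?thesis
    unfolding hom_poly_def by (auto intro!: exI[of _ "\<lambda>\<alpha>. c * a \<alpha>"] simp: sum_distrib_left mult.assoc)
qed

lemma hom_poly_zero: "hom_poly d k (\<lambda>x. 0)"
  unfolding hom_poly_def by (auto intro!: exI[of _ "\<lambda>\<alpha>. 0"])

lemma hom_poly_scale:
  assumes "hom_poly d k p" shows "p (\<lambda>i. t * x i) = t ^ k * p x"
proof -
  obtain c where c: "p = (\<lambda>x. \<Sum>\<alpha>\<in>multi_idx d k. c \<alpha> * (\<Prod>i<d. x i ^ \<alpha> i))"
    using hom_poly_eq[OF assms] by blast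
  have "(\<Prod>i<d. (t * x i) ^ \<alpha> i) = t ^ k * (\<Prod>i<d. x i ^ \<alpha> i)" if "\<alpha> \<in> multi_idx d k" for \<alpha>
    using that by (simp add: power_mult_distrib prod.distrib multi_idx_def power_sum[symmetric])
  then show ?thesis
    unfolding c by (simp add: sum_distrib_left algebra_simps cong: sum.cong)
qed

lemma hom_poly_cong: "hom_poly d k p \<Longrightarrow> (\<And>i. i < d \<Longrightarrow> x i = y i) \<Longrightarrow> p x = p y"
  by (drule hom_poly_eq) auto

lemma hom_poly_euler:
  assumes hp: "hom_poly d k p"
  shows "(\<Sum>l<d. x l * partial l p x) = real k * p x"
proof -
  have "((\<lambda>t. p (\<lambda>i. t * x i)) has_real_derivative (\<Sum>i<d. x i * partial i p ((\<lambda>t. \<lambda>i. t * x i) 1))) (at 1)"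
    by (rule poly_on_chain_rule[OF hom_poly_poly_on[OF hp]]) (auto intro!: derivative_eq_intros)
  moreover have "((\<lambda>t. p (\<lambda>i. t * x i)) has_real_derivative real k * p x) (at 1)"
    unfolding hom_poly_scale[OF hp] by (auto intro!: derivative_eq_intros)
  ultimately show ?thesis by (simp add: DERIV_unique)
qed

lemma hom_poly_sum_squares:
  assumes hp: "\<And>i. i < n \<Longrightarrow> hom_poly d k (P i)" and d: "d \<ge> 1"
    and S: "\<forall>x\<in>sph d 1. (\<Sum>i<n. (P i x)\<^sup>2) = C"
  shows "(\<Sum>i<n. (P i x)\<^sup>2) = C * ip d x x ^ k"
proof -
  define r where "r = sqrt (ip d x x)"
  have ip0: "ip d x x \<ge> 0" by (simp add: ip_def sum_nonneg)
  define z where "z = (if ip d x x > 0 then radproj d x else unitvec 0)"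
  have z: "z \<in> sph d 1"
    using radproj_in_sph unitvec_in_sph d by (auto simp: z_def)
  have xz: "x i = r * z i" if i: "i < d" for i
  proof (cases "ip d x x > 0")
    case True
    then show ?thesis using i by (simp add: z_def r_def radproj_def)
  next
    case False
    then have "(\<Sum>i<d. x i * x i) = 0" using ip0 by (simp add: ip_def)
    then have "x i * x i = 0" using i by (subst (asm) sum_nonneg_eq_0_iff) auto
    then show ?thesis using False ip0 by (simp add: r_def)
  qed
  have "P i x = r ^ k * P i z" if i: "i < n" for i
    using hom_poly_cong[OF hp[OF i], of x "\<lambda>j. r * z j"] hom_poly_scale[OF hp[OF i]] xz by simp
  then have "(\<Sum>i<n. (P i x)\<^sup>2) = (r\<^sup>2) ^ k * (\<Sum>i<n. (P i z)\<^sup>2)"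
    by (simp add: sum_distrib_left power_mult_distrib power_mult[symmetric] mult.commute[of 2 k])
  then show ?thesis using S z ip0 by (simp add: r_def)
qed

lemma harmonic_fun_const_mult:
  assumes "poly_on d p" "harmonic_fun d p" shows "harmonic_fun d (\<lambda>x. c * p x)"
proof -
  have "partial l (partial l (\<lambda>x. c * p x)) x = c * partial l (partial l p) x" for l x
    using poly_on_has_partials[OF assms(1)] poly_on_has_partials[OF poly_on_partial[OF assms(1)]]
    by (simp add: partial_const_mult)
  then show ?thesis
    using assms(2) by (simp add: harmonic_fun_def sum_distrib_left[symmetric])
qed

definition sph_eigenvalue :: "nat \<Rightarrow> nat \<Rightarrow> real" where
  "sph_eigenvalue d k = real k * (real k + real d - 2)"

lemma sph_eigenvalue_strict_mono:
  assumes "2 \<le> d" and "a < b" shows "sph_eigenvalue d a < sph_eigenvalue d b"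
proof -
  have "0 < (real b - real a) * (real b + real a + (real d - 2))"
    using assms by (intro mult_pos_pos) auto
  then show ?thesis unfolding sph_eigenvalue_def by (simp add: algebra_simps)
qed

locale harmonic_hom_poly =
  fixes d k :: nat and p :: "(nat \<Rightarrow> real) \<Rightarrow> real"
  assumes hom: "hom_poly d k p" and harmonic: "harmonic_fun d p"
begin

lemma poly_on: "poly_on d p"
  by (rule hom_poly_poly_on[OF hom])

lemma poly_fun [simp]: "poly_fun p"
  by (rule poly_funI[OF poly_on])

lemma euler: "(\<Sum>l<d. x l * partial l p x) = real k * p x"
  by (rule hom_poly_euler[OF hom])

lemma laplacian: "(\<Sum>l<d. partial l (partial l p) x) = 0"
  using harmonic by (simp add: harmonic_fun_def)

lemma euler_partial:
  assumes "h < d"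
  shows "(\<Sum>l<d. x l * partial h (partial l p) x) = (real k - 1) * partial h p x"
proof -
  have "partial h (\<lambda>x. \<Sum>l<d. x l * partial l p x) x = partial h (\<lambda>x. real k * p x) x"
    by (simp only: euler)
  then have "partial h p x + (\<Sum>l<d. x l * partial h (partial l p) x) = real k * partial h p x"
    using assms by (simp add: sum.distrib)
  then show ?thesis by (simp add: algebra_simps)
qed

lemma poly_on_tan_deriv: "poly_on d (tan_deriv d p Y)"
  unfolding tan_deriv_expand using poly_on
  by (intro poly_on_sum poly_on_mult poly_on_diff poly_on_const poly_on_coord poly_on_partial) auto

lemma poly_fun_tan_deriv [simp]: "poly_fun (tan_deriv d p Y)"
  by (rule poly_funI[OF poly_on_tan_deriv])

lemma partial_tan_deriv:
  assumes x: "x \<in> sph d 1" and Y: "ip d Y x = 0" and h: "h < d"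
  shows "partial h (tan_deriv d p Y) x = - Y h * real k * p x + (\<Sum>l<d. Y l * partial h (partial l p) x)"
proof -
  have Y': "(\<Sum>m<d. Y m * x m) = 0" using Y by (simp add: ip_def)
  have "partial h (tan_deriv d p Y) x
      = (\<Sum>l<d. - (Y h * (x l * partial l p x)) + Y l * partial h (partial l p) x)"
    unfolding tan_deriv_expand using h Y' by simp (rule sum.cong, auto simp: algebra_simps)
  also have "\<dots> = - (Y h * (\<Sum>l<d. x l * partial l p x)) + (\<Sum>l<d. Y l * partial h (partial l p) x)"
    by (simp add: sum.distrib sum_negf sum_distrib_left sum_subtractf)
  finally show ?thesis by (simp add: euler)
qed

lemma tan_deriv_tan_deriv_tbasis:
  assumes x: "x \<in> sph d 1" and j: "j < d"
  shows "tan_deriv d (tan_deriv d p (tbasis d x j)) (tbasis d x j) x =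
     - real k * p x * (1 - x j * x j) + partial j (partial j p) x
     - 2 * x j * (real k - 1) * partial j p x + x j * x j * (real k - 1) * real k * p x"
proof -
  let ?E = "tbasis d x j"
  have "tan_deriv d (tan_deriv d p ?E) ?E x
     = (\<Sum>h<d. ?E h * (- ?E h * real k * p x + (\<Sum>l<d. ?E l * partial h (partial l p) x)))"
    unfolding tan_deriv_def[of d "tan_deriv d p ?E"] ptan_tbasis[OF x]
    using partial_tan_deriv[OF x ip_tbasis_self[OF x]] by simp
  also have "\<dots> = (\<Sum>h<d. ?E h * (- ?E h * real k * p x
                      + (partial h (partial j p) x - x j * ((real k - 1) * partial h p x))))"
    using sum_tbasis_mult[OF j] euler_partial by (intro sum.cong) simp_all
  also have "\<dots> = - real k * p x * (\<Sum>h<d. ?E h * ?E h) + (\<Sum>h<d. ?E h * partial j (partial h p) x)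
       - x j * (real k - 1) * (\<Sum>h<d. ?E h * partial h p x)"
    using partial_commute[OF poly_on, of _ j]
    by (simp add: algebra_simps sum.distrib sum_subtractf sum_distrib_left sum_negf)
  also have "(\<Sum>h<d. ?E h * partial j (partial h p) x) = partial j (partial j p) x - x j * ((real k - 1) * partial j p x)"
    using sum_tbasis_mult[OF j, of x "\<lambda>h. partial j (partial h p) x"] euler_partial[OF j] by simp
  also have "(\<Sum>h<d. ?E h * partial h p x) = partial j p x - x j * (real k * p x)"
    using sum_tbasis_mult[OF j, of x "\<lambda>h. partial h p x"] euler by simp
  finally show ?thesis using sum_tbasis_sq[OF x j] by (simp add: algebra_simps)
qed

text \<open>The left-hand side is the Laplace-Beltrami operator of the sphere applied to p.\<close>
lemma sph_laplacian:
  assumes x: "x \<in> sph d 1"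
  shows "(\<Sum>j<d. tan_deriv d (tan_deriv d p (tbasis d x j)) (tbasis d x j) x) = - sph_eigenvalue d k * p x"
proof -
  have "(\<Sum>j<d. tan_deriv d (tan_deriv d p (tbasis d x j)) (tbasis d x j) x)
     = - real k * p x * (real d - (\<Sum>j<d. x j * x j)) + (\<Sum>j<d. partial j (partial j p) x)
       - 2 * (real k - 1) * (\<Sum>j<d. x j * partial j p x) + (real k - 1) * real k * p x * (\<Sum>j<d. x j * x j)"
    by (simp add: tan_deriv_tan_deriv_tbasis[OF x] sum.distrib sum_subtractf sum_distrib_left
        algebra_simps sum_negf)
  also have "\<dots> = - sph_eigenvalue d k * p x"
    using sph_ip[OF x] by (simp add: ip_def euler laplacian sph_eigenvalue_def algebra_simps)
  finally show ?thesis .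
qed

lemma sum_tan_deriv_sq:
  assumes x: "x \<in> sph d 1"
  shows "(\<Sum>j<d. (tan_deriv d p (tbasis d x j) x)\<^sup>2) = (\<Sum>l<d. (partial l p x)\<^sup>2) - (real k * p x)\<^sup>2"
proof -
  have "(\<Sum>j<d. (tan_deriv d p (tbasis d x j) x)\<^sup>2) = (\<Sum>j<d. (partial j p x - x j * (real k * p x))\<^sup>2)"
    by (rule sum.cong[OF refl])
       (simp add: tan_deriv_def ptan_tbasis[OF x] sum_tbasis_mult euler)
  also have "\<dots> = (\<Sum>l<d. (partial l p x)\<^sup>2) - 2 * (real k * p x) * (\<Sum>j<d. x j * partial j p x)
        + (real k * p x)\<^sup>2 * (\<Sum>j<d. x j * x j)"
    by (simp add: power2_eq_square algebra_simps sum.distrib sum_subtractf sum_distrib_left)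
  also have "\<dots> = (\<Sum>l<d. (partial l p x)\<^sup>2) - (real k * p x)\<^sup>2"
    using sph_ip[OF x] by (simp add: ip_def euler power2_eq_square)
  finally show ?thesis .
qed

end

lemma harmonic_hom_poly_const_mult:
  "harmonic_hom_poly d k p \<Longrightarrow> harmonic_hom_poly d k (\<lambda>x. c * p x)"
  unfolding harmonic_hom_poly_def
  by (auto intro: hom_poly_const_mult harmonic_fun_const_mult hom_poly_poly_on)

lemma harmonic_hom_poly_zero: "harmonic_hom_poly d k (\<lambda>x. 0)"
proof
  have "partial j (\<lambda>x. 0) = (\<lambda>x. 0)" for j
    by (simp add: fun_eq_iff)
  then show "harmonic_fun d (\<lambda>x. 0)"
    by (simp add: harmonic_fun_def)
qed (rule hom_poly_zero)

lemma sum_blockwise: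
  fixes f :: "nat \<Rightarrow> real"
  assumes "n1 \<le> N"
  shows "(\<Sum>i<N. (if i < n1 then a else b) * f i) = a * (\<Sum>i<n1. f i) + b * (\<Sum>i\<in>{n1..<N}. f i)"
proof -
  have "{..<N} = {..<n1} \<union> {n1..<N}" using assms by auto
  then have "(\<Sum>i<N. (if i < n1 then a else b) * f i)
      = (\<Sum>i<n1. (if i < n1 then a else b) * f i) + (\<Sum>i\<in>{n1..<N}. (if i < n1 then a else b) * f i)"
    by (simp add: sum.union_disjoint ivl_disj_int)
  also have "\<dots> = a * (\<Sum>i<n1. f i) + b * (\<Sum>i\<in>{n1..<N}. f i)"
    by (simp add: sum_distrib_left)
  finally show ?thesis .
qed

locale eigenmap_join =
  fixes d N n1 k1 k2 :: nat
    and Q :: "nat \<Rightarrow> (nat \<Rightarrow> real) \<Rightarrow> real" and \<phi> :: "(nat \<Rightarrow> real) \<Rightarrow> (nat \<Rightarrow> real)"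
  assumes dim: "2 \<le> d"
    and n1_le: "n1 \<le> N"
    and degrees_distinct: "k1 \<noteq> k2"
    and harmonic_comp: "\<And>i. harmonic_hom_poly d (if i < n1 then k1 else k2) (Q i)"
    and comp_vanish: "\<And>i. N \<le> i \<Longrightarrow> Q i = (\<lambda>x. 0)"
    and sum_sq_block1: "\<And>x. (\<Sum>i<n1. (Q i x)\<^sup>2) = ip d x x ^ k1 / 2"
    and sum_sq_block2: "\<And>x. (\<Sum>i\<in>{n1..<N}. (Q i x)\<^sup>2) = ip d x x ^ k2 / 2"
    and phi_comp: "\<And>z i. z \<in> sph d 1 \<Longrightarrow> \<phi> z i = Q i z"
begin

abbreviation deg :: "nat \<Rightarrow> nat" where
  "deg i \<equiv> if i < n1 then k1 else k2"

abbreviation eigenval :: "nat \<Rightarrow> real" where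
  "eigenval i \<equiv> sph_eigenvalue d (deg i)"

definition energy :: real where
  "energy = (sph_eigenvalue d k1 + sph_eigenvalue d k2) / 2"

definition \<sigma> :: "nat \<Rightarrow> real" where
  "\<sigma> i = energy - eigenval i"

lemma \<sigma>_blockwise:
  "\<sigma> i = (if i < n1 then (sph_eigenvalue d k2 - sph_eigenvalue d k1) / 2
                      else (sph_eigenvalue d k1 - sph_eigenvalue d k2) / 2)"
  by (simp add: \<sigma>_def energy_def field_simps)

lemma poly_on_comp: "poly_on d (Q i)"
  by (rule harmonic_hom_poly.poly_on[OF harmonic_comp])

lemma poly_fun_comp [simp]: "poly_fun (Q i)"
  by (rule harmonic_hom_poly.poly_fun[OF harmonic_comp])

lemma poly_fun_tan_deriv_comp [simp]: "poly_fun (tan_deriv d (Q i) Y)"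
  by (rule harmonic_hom_poly.poly_fun_tan_deriv[OF harmonic_comp])

lemma sum_comp_partial_block:
  assumes bs: "\<And>x. (\<Sum>i\<in>B. (Q i x)\<^sup>2) = ip d x x ^ k / 2" and l: "l < d"
  shows "(\<Sum>i\<in>B. Q i y * partial l (Q i) y) = real k * ip d y y ^ (k - 1) * y l / 2"
proof -
  have "partial l (\<lambda>x. \<Sum>i\<in>B. (Q i x)\<^sup>2) y = partial l (\<lambda>x. ip d x x ^ k / 2) y"
    by (simp only: bs)
  then have "(\<Sum>i\<in>B. 2 * Q i y * partial l (Q i) y) = real k * ip d y y ^ (k - 1) * y l"
    using l by simp
  then show ?thesis by (simp add: sum_distrib_left[symmetric] mult.assoc)
qed

lemma sum_grad_sq_block:
  assumes bs: "\<And>x. (\<Sum>i\<in>B. (Q i x)\<^sup>2) = ip d x x ^ k / 2" and x: "x \<in> sph d 1"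
  shows "(\<Sum>i\<in>B. \<Sum>l<d. (partial l (Q i) x)\<^sup>2) = real k * (2 * real k + real d - 2) / 2"
proof -
  have ipx: "ip d x x = 1" using sph_ip[OF x] by simp
  have second: "(\<Sum>i\<in>B. (partial l (Q i) x)\<^sup>2 + Q i x * partial l (partial l (Q i)) x)
      = (real k * (real k - 1) * 2 * (x l * x l) + real k) / 2" if l: "l < d" for l
  proof -
    have "partial l (\<lambda>y. \<Sum>i\<in>B. Q i y * partial l (Q i) y) x
        = partial l (\<lambda>y. real k * ip d y y ^ (k - 1) * y l / 2) x"
      by (simp only: sum_comp_partial_block[OF bs l])
    then show ?thesis using l ipx by (cases k) (simp_all add: power2_eq_square algebra_simps)
  qed
  have "(\<Sum>l<d. \<Sum>i\<in>B. (partial l (Q i) x)\<^sup>2 + Q i x * partial l (partial l (Q i)) x)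
      = (\<Sum>l<d. (real k * (real k - 1) * 2 * (x l * x l) + real k) / 2)"
    by (rule sum.cong[OF refl]) (rule second, simp)
  also have "\<dots> = (real k * (real k - 1) * 2 * (\<Sum>l<d. x l * x l) + real k * real d) / 2"
    by (simp add: sum_divide_distrib[symmetric] sum.distrib sum_distrib_left[symmetric])
  also have "\<dots> = real k * (2 * real k + real d - 2) / 2"
    using ipx by (simp add: ip_def algebra_simps)
  finally have total: "(\<Sum>l<d. \<Sum>i\<in>B. (partial l (Q i) x)\<^sup>2 + Q i x * partial l (partial l (Q i)) x)
      = real k * (2 * real k + real d - 2) / 2" .
  have "(\<Sum>l<d. \<Sum>i\<in>B. Q i x * partial l (partial l (Q i)) x)
      = (\<Sum>i\<in>B. Q i x * (\<Sum>l<d. partial l (partial l (Q i)) x))"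
    unfolding sum_distrib_left by (rule sum.swap)
  also have "\<dots> = 0"
    by (simp add: harmonic_hom_poly.laplacian[OF harmonic_comp])
  finally have "(\<Sum>i\<in>B. \<Sum>l<d. (partial l (Q i) x)\<^sup>2)
      = (\<Sum>l<d. \<Sum>i\<in>B. (partial l (Q i) x)\<^sup>2) + (\<Sum>l<d. \<Sum>i\<in>B. Q i x * partial l (partial l (Q i)) x)"
    by (simp add: sum.swap[of _ B])
  also have "\<dots> = real k * (2 * real k + real d - 2) / 2"
    unfolding total[symmetric] by (simp add: sum.distrib)
  finally show ?thesis .
qed

lemma sum_blockwise_sq_comp:
  assumes x: "x \<in> sph d 1"
  shows "(\<Sum>i<N. (if i < n1 then a else b) * (Q i x * Q i x)) = (a + b) / 2"
proof -
  have block1: "(\<Sum>i<n1. Q i x * Q i x) = 1 / 2" and block2: "(\<Sum>i\<in>{n1..<N}. Q i x * Q i x) = 1 / 2"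
    using sum_sq_block1[of x] sum_sq_block2[of x] sph_ip[OF x] by (simp_all add: power2_eq_square)
  show ?thesis
    unfolding sum_blockwise[OF n1_le] block1 block2 by simp
qed

lemma sum_blockwise_comp_partial:
  assumes x: "x \<in> sph d 1" and l: "l < d"
  shows "(\<Sum>i<N. (if i < n1 then a else b) * (Q i x * partial l (Q i) x)) = (a * real k1 + b * real k2) / 2 * x l"
proof -
  have block1: "(\<Sum>i<n1. Q i x * partial l (Q i) x) = real k1 * x l / 2"
    and block2: "(\<Sum>i\<in>{n1..<N}. Q i x * partial l (Q i) x) = real k2 * x l / 2"
    using sum_comp_partial_block[OF sum_sq_block1 l, of x] sum_comp_partial_block[OF sum_sq_block2 l, of x]
      sph_ip[OF x] by simp_all
  show ?thesis
    unfolding sum_blockwise[OF n1_le] block1 block2 by (simp add: algebra_simps)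
qed

lemma maps_to_sph: "x \<in> sph d 1 \<Longrightarrow> \<phi> x \<in> sph N 1"
  using sum_blockwise_sq_comp[of x 1 1] comp_vanish
  by (simp add: sph_def ip_def phi_comp)

lemma ptan_blockwise:
  assumes x: "x \<in> sph d 1"
  shows "ptan N (\<phi> x) (\<lambda>j. (if j < n1 then a else b) * Q j x) i = ((if i < n1 then a else b) - (a + b) / 2) * Q i x"
proof -
  have ipw: "ip N (\<lambda>j. (if j < n1 then a else b) * Q j x) (\<phi> x) = (a + b) / 2"
    using sum_blockwise_sq_comp[OF x, of a b] by (simp add: ip_def phi_comp[OF x] mult.assoc)
  show ?thesis
    unfolding ptan_def ipw by (simp add: phi_comp[OF x] algebra_simps)
qed

lemma dmap_comp: "z \<in> sph d 1 \<Longrightarrow> dmap d \<phi> z W i = tan_deriv d (Q i) W z"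
  unfolding dmap_def by (rule vdir_hom0[OF _ poly_on_comp]) (simp_all add: phi_comp)

lemma sff_comp:
  assumes x: "x \<in> sph d 1" and Y: "ip d Y x = 0"
  shows "sff d N \<phi> x X Y i = ptan N (\<phi> x) (\<lambda>i. tan_deriv d (tan_deriv d (Q i) Y) X x) i"
proof -
  have "vdir d (hom0 d (\<lambda>z. dmap d \<phi> z (tfield d Y z))) x X = (\<lambda>i. tan_deriv d (tan_deriv d (Q i) Y) X x)"
    by (rule ext, rule vdir_hom0[OF x harmonic_hom_poly.poly_on_tan_deriv[OF harmonic_comp]])
       (simp add: dmap_comp tfield_def tan_deriv_ptan)
  then show ?thesis
    unfolding sff_def conn_def lc_tfield_tangent[OF x Y] by (simp add: dmap_def vdir_zero)
qed

lemma tension_comp: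
  assumes x: "x \<in> sph d 1"
  shows "tension d N \<phi> x i = \<sigma> i * Q i x"
proof -
  have laplacian: "(\<lambda>i. \<Sum>j<d. tan_deriv d (tan_deriv d (Q i) (tbasis d x j)) (tbasis d x j) x)
      = (\<lambda>j. (if j < n1 then - sph_eigenvalue d k1 else - sph_eigenvalue d k2) * Q j x)"
    by (auto simp: fun_eq_iff harmonic_hom_poly.sph_laplacian[OF harmonic_comp x])
  have "tension d N \<phi> x i = ptan N (\<phi> x) (\<lambda>i. \<Sum>j<d. tan_deriv d (tan_deriv d (Q i) (tbasis d x j)) (tbasis d x j) x) i"
    by (simp add: tension_def tr_tbasis sff_comp[OF x ip_tbasis_self[OF x]] ptan_sum)
  also have "\<dots> = \<sigma> i * Q i x"
    unfolding laplacian ptan_blockwise[OF x] by (simp add: \<sigma>_def energy_def field_simps)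
  finally show ?thesis .
qed


lemma tension_orthogonal_dmap:
  assumes z: "z \<in> sph d 1" and P: "ip d P z = 0"
  shows "ip N (\<lambda>i. \<sigma> i * Q i z) (\<lambda>i. tan_deriv d (Q i) P z) = 0"
proof -
  let ?a = "(sph_eigenvalue d k2 - sph_eigenvalue d k1) / 2" and ?b = "(sph_eigenvalue d k1 - sph_eigenvalue d k2) / 2"
  have "ip N (\<lambda>i. \<sigma> i * Q i z) (\<lambda>i. tan_deriv d (Q i) P z)
      = (\<Sum>i<N. \<Sum>l<d. P l * (\<sigma> i * (Q i z * partial l (Q i) z)))"
    by (simp add: ip_def tan_deriv_def ptan_tangent[OF P] sum_distrib_left algebra_simps)
  also have "\<dots> = (\<Sum>l<d. P l * (\<Sum>i<N. (if i < n1 then ?a else ?b) * (Q i z * partial l (Q i) z)))"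
    unfolding sum_distrib_left \<sigma>_blockwise by (rule sum.swap)
  also have "\<dots> = (\<Sum>l<d. P l * ((?a * real k1 + ?b * real k2) / 2 * z l))"
    using sum_blockwise_comp_partial[OF z] by (intro sum.cong) simp_all
  also have "\<dots> = (?a * real k1 + ?b * real k2) / 2 * ip d P z"
    by (simp add: ip_def sum_distrib_left mult.left_commute)
  finally show ?thesis using P by simp
qed

lemma conn_tension_tfield:
  assumes z: "z \<in> sph d 1"
  shows "conn d N \<phi> (tension d N \<phi>) z (tfield d Y z) i = \<sigma> i * tan_deriv d (Q i) Y z"
proof -
  have "vdir d (hom0 d (tension d N \<phi>)) z (tfield d Y z) = (\<lambda>i. \<sigma> i * tan_deriv d (Q i) Y z)"
  proof
    fix i
    have "vdir d (hom0 d (tension d N \<phi>)) z (tfield d Y z) i = tan_deriv d (\<lambda>z. \<sigma> i * Q i z) (tfield d Y z) z"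
      by (rule vdir_hom0[OF z]) (auto intro!: poly_on_mult poly_on_const poly_on_comp simp: tension_comp)
    then show "vdir d (hom0 d (tension d N \<phi>)) z (tfield d Y z) i = \<sigma> i * tan_deriv d (Q i) Y z"
      by (simp add: tan_deriv_const_mult tfield_def tan_deriv_ptan[OF z])
  qed
  moreover have "ip N (\<lambda>i. \<sigma> i * tan_deriv d (Q i) Y z) (\<phi> z) = 0"
    using tension_orthogonal_dmap[OF z ip_ptan_self[OF z], of Y]
    by (simp add: ip_def phi_comp[OF z] tan_deriv_ptan[OF z] algebra_simps)
  ultimately show ?thesis
    by (simp add: conn_def ptan_def)
qed

lemma hess_sec_tension:
  assumes x: "x \<in> sph d 1" and Y: "ip d Y x = 0"
  shows "hess_sec d N \<phi> (tension d N \<phi>) x X Y i =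
     ptan N (\<phi> x) (\<lambda>i. \<sigma> i * tan_deriv d (tan_deriv d (Q i) Y) X x) i"
proof -
  have "vdir d (hom0 d (\<lambda>z. conn d N \<phi> (tension d N \<phi>) z (tfield d Y z))) x X
      = (\<lambda>i. \<sigma> i * tan_deriv d (tan_deriv d (Q i) Y) X x)"
  proof
    fix i
    have "vdir d (hom0 d (\<lambda>z. conn d N \<phi> (tension d N \<phi>) z (tfield d Y z))) x X i
        = tan_deriv d (\<lambda>z. \<sigma> i * tan_deriv d (Q i) Y z) X x"
      by (rule vdir_hom0[OF x])
         (auto intro!: poly_on_mult poly_on_const harmonic_hom_poly.poly_on_tan_deriv[OF harmonic_comp]
               simp: conn_tension_tfield)
    then show "vdir d (hom0 d (\<lambda>z. conn d N \<phi> (tension d N \<phi>) z (tfield d Y z))) x X i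
        = \<sigma> i * tan_deriv d (tan_deriv d (Q i) Y) X x"
      by (simp add: tan_deriv_const_mult)
  qed
  moreover have "conn d N \<phi> (tension d N \<phi>) x (lc d (tfield d Y) x X) i = 0"
    unfolding lc_tfield_tangent[OF x Y] conn_def vdir_zero by (simp add: ptan_def ip_def)
  ultimately show ?thesis
    unfolding hess_sec_def conn_def[of d N \<phi> "\<lambda>z. conn d N \<phi> (tension d N \<phi>) z (tfield d Y z)"] by simp
qed

lemma trace_hess_sec_tension:
  assumes x: "x \<in> sph d 1"
  shows "tr d x (hess_sec d N \<phi> (tension d N \<phi>) x) i = ptan N (\<phi> x) (\<lambda>i. - \<sigma> i * eigenval i * Q i x) i"
proof -
  have "tr d x (hess_sec d N \<phi> (tension d N \<phi>) x) i
      = ptan N (\<phi> x) (\<lambda>i. \<sigma> i * (\<Sum>j<d. tan_deriv d (tan_deriv d (Q i) (tbasis d x j)) (tbasis d x j) x)) i"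
    by (simp add: tr_tbasis hess_sec_tension[OF x ip_tbasis_self[OF x]] ptan_sum sum_distrib_left)
  then show ?thesis
    by (simp add: harmonic_hom_poly.sph_laplacian[OF harmonic_comp x] mult.assoc)
qed

lemma energy_density:
  assumes x: "x \<in> sph d 1"
  shows "(\<Sum>j<d. ip N (dmap d \<phi> x (tbasis d x j)) (dmap d \<phi> x (tbasis d x j))) = energy"
proof -
  have deg_sq: "(real (deg i) * Q i x)\<^sup>2 = (if i < n1 then real k1 ^ 2 else real k2 ^ 2) * (Q i x * Q i x)" for i
    by (simp add: power2_eq_square)
  have split: "(\<Sum>i<N. \<Sum>l<d. (partial l (Q i) x)\<^sup>2)
      = (\<Sum>i<n1. \<Sum>l<d. (partial l (Q i) x)\<^sup>2) + (\<Sum>i\<in>{n1..<N}. \<Sum>l<d. (partial l (Q i) x)\<^sup>2)"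
    using sum_blockwise[OF n1_le, of 1 1 "\<lambda>i. \<Sum>l<d. (partial l (Q i) x)\<^sup>2"] by simp
  have "(\<Sum>j<d. ip N (dmap d \<phi> x (tbasis d x j)) (dmap d \<phi> x (tbasis d x j)))
      = (\<Sum>i<N. \<Sum>j<d. (tan_deriv d (Q i) (tbasis d x j) x)\<^sup>2)"
    unfolding ip_def dmap_comp[OF x] power2_eq_square by (rule sum.swap)
  also have "\<dots> = (\<Sum>i<N. (\<Sum>l<d. (partial l (Q i) x)\<^sup>2) - (real (deg i) * Q i x)\<^sup>2)"
    by (intro sum.cong refl harmonic_hom_poly.sum_tan_deriv_sq[OF harmonic_comp x])
  also have "\<dots> = (\<Sum>i<n1. \<Sum>l<d. (partial l (Q i) x)\<^sup>2) + (\<Sum>i\<in>{n1..<N}. \<Sum>l<d. (partial l (Q i) x)\<^sup>2)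
      - (real k1 ^ 2 + real k2 ^ 2) / 2"
    unfolding sum_subtractf deg_sq split sum_blockwise_sq_comp[OF x] ..
  also have "\<dots> = energy"
    unfolding sum_grad_sq_block[OF sum_sq_block1 x] sum_grad_sq_block[OF sum_sq_block2 x]
    by (simp add: energy_def sph_eigenvalue_def power2_eq_square field_simps)
  finally show ?thesis .
qed

lemma trace_curv_tension:
  assumes x: "x \<in> sph d 1"
  shows "tr d x (\<lambda>X Y. curv_sph N (dmap d \<phi> x X) (tension d N \<phi> x) (dmap d \<phi> x Y)) i
      = - energy * tension d N \<phi> x i"
proof -
  have "ip N (tension d N \<phi> x) (dmap d \<phi> x (tbasis d x j)) = 0" for j
    using tension_orthogonal_dmap[OF x ip_tbasis_self[OF x]]
    by (simp add: tension_comp[OF x] dmap_comp[OF x] ip_def)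
  then have "tr d x (\<lambda>X Y. curv_sph N (dmap d \<phi> x X) (tension d N \<phi> x) (dmap d \<phi> x Y)) i
      = - (\<Sum>j<d. ip N (dmap d \<phi> x (tbasis d x j)) (dmap d \<phi> x (tbasis d x j))) * tension d N \<phi> x i"
    by (simp add: tr_tbasis curv_sph_def sum_negf sum_distrib_right)
  then show ?thesis
    unfolding energy_density[OF x] .
qed

text \<open>On both blocks tau_2 = (sigma^2 - (lambda_2 - lambda_1)^2 / 4) Q = 0.\<close>
lemma bitension_vanishes:
  assumes x: "x \<in> sph d 1"
  shows "bitension d N \<phi> x i = 0"
proof -
  let ?l1 = "sph_eigenvalue d k1" and ?l2 = "sph_eigenvalue d k2"
  let ?a = "- (?l2 - ?l1) / 2 * ?l1" and ?b = "- (?l1 - ?l2) / 2 * ?l2"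
  have "(\<lambda>i. - \<sigma> i * eigenval i * Q i x) = (\<lambda>j. (if j < n1 then ?a else ?b) * Q j x)"
    by (auto simp: fun_eq_iff \<sigma>_blockwise field_simps)
  then have hess: "tr d x (hess_sec d N \<phi> (tension d N \<phi>) x) i
      = ((if i < n1 then ?a else ?b) - (?a + ?b) / 2) * Q i x"
    by (simp only: trace_hess_sec_tension[OF x] ptan_blockwise[OF x])
  show ?thesis
    unfolding bitension_def rough_lap_def trace_curv_tension[OF x] tension_comp[OF x] hess
    by (cases "i < n1") (simp_all add: \<sigma>_blockwise energy_def field_simps)
qed

lemma tension_nonzero: "\<exists>x\<in>sph d 1. \<exists>i<N. tension d N \<phi> x i \<noteq> 0"
proof -
  have x0: "unitvec 0 \<in> sph d 1"
    using dim by (intro unitvec_in_sph) simp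
  have "\<exists>i<n1. Q i (unitvec 0) \<noteq> 0"
  proof (rule ccontr)
    assume "\<not> (\<exists>i<n1. Q i (unitvec 0) \<noteq> 0)"
    then have "(\<Sum>i<n1. (Q i (unitvec 0))\<^sup>2) = 0" by simp
    then show False using sum_sq_block1[of "unitvec 0"] sph_ip[OF x0] by simp
  qed
  then obtain i where i: "i < n1" "Q i (unitvec 0) \<noteq> 0" by blast
  have "sph_eigenvalue d k1 \<noteq> sph_eigenvalue d k2"
    using degrees_distinct sph_eigenvalue_strict_mono[OF dim, of k1 k2] sph_eigenvalue_strict_mono[OF dim, of k2 k1]
    by (cases "k1 < k2") auto
  then have "tension d N \<phi> (unitvec 0) i \<noteq> 0"
    using i by (simp add: tension_comp[OF x0] \<sigma>_blockwise)
  then show ?thesis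
    using x0 i n1_le by (intro bexI[of _ "unitvec 0"] exI[of _ i]) auto
qed

theorem proper_biharmonic: "proper_biharmonic d N \<phi>"
  unfolding proper_biharmonic_def using maps_to_sph bitension_vanishes tension_nonzero by blast

end

lemma sph_harm_onb_harmonic_polys:
  assumes "sph_harm_onb d k fs"
  obtains P where "\<And>i. harmonic_hom_poly d k (P i)"
    and "\<And>i x. i < length fs \<Longrightarrow> x \<in> sph d 1 \<Longrightarrow> (fs ! i) x = P i x"
proof -
  have "\<exists>p. harmonic_hom_poly d k p \<and> (i < length fs \<longrightarrow> (\<forall>x\<in>sph d 1. (fs ! i) x = p x))" for i
  proof (cases "i < length fs")
    case True
    then have "fs ! i \<in> sph_harm d k"
      using assms by (auto simp: sph_harm_onb_def)
    then show ?thesis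
      by (auto simp: sph_harm_def harmonic_hom_poly_def)
  qed (auto intro: harmonic_hom_poly_zero)
  then show ?thesis
    using that by metis
qed

lemma sum_squares_extend:
  assumes P: "\<And>i. harmonic_hom_poly d k (P i)" and d: "d \<ge> 1"
    and fs: "\<And>i x. i < length fs \<Longrightarrow> x \<in> sph d 1 \<Longrightarrow> (fs ! i) x = P i x"
    and norm: "\<forall>x\<in>sph d 1. (\<Sum>i<length fs. (c * (fs ! i) x)\<^sup>2) = 1 / 2"
  shows "(\<Sum>i<length fs. (c * P i x)\<^sup>2) = ip d x x ^ k / 2"
  using hom_poly_sum_squares[of "length fs" d k "\<lambda>i x. c * P i x" "1 / 2" x] norm fs d
    hom_poly_const_mult[OF harmonic_hom_poly.hom[OF P]]
  by simp

theorem mainTheorem11: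
  fixes m k1 k2 :: nat and c1 c2 :: real
    and fs1 fs2 :: "((nat \<Rightarrow> real) \<Rightarrow> real) list"
  assumes "m \<ge> 1" and "k1 \<noteq> k2"
    and "sph_harm_onb (m + 1) k1 fs1" and "sph_harm_onb (m + 1) k2 fs2"
    and "c1 > 0" and "\<forall>x\<in>sph (m + 1) 1. (\<Sum>i<length fs1. (c1 * (fs1 ! i) x) ^ 2) = 1 / 2"
    and "c2 > 0" and "\<forall>x\<in>sph (m + 1) 1. (\<Sum>i<length fs2. (c2 * (fs2 ! i) x) ^ 2) = 1 / 2"
  shows "proper_biharmonic (m + 1) (length fs1 + length fs2) (pair_map c1 fs1 c2 fs2)"
proof -
  obtain P1 where P1: "\<And>i. harmonic_hom_poly (m + 1) k1 (P1 i)"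
    and fs1: "\<And>i x. i < length fs1 \<Longrightarrow> x \<in> sph (m + 1) 1 \<Longrightarrow> (fs1 ! i) x = P1 i x"
    using sph_harm_onb_harmonic_polys[OF assms(3)] by blast
  obtain P2 where P2: "\<And>i. harmonic_hom_poly (m + 1) k2 (P2 i)"
    and fs2: "\<And>i x. i < length fs2 \<Longrightarrow> x \<in> sph (m + 1) 1 \<Longrightarrow> (fs2 ! i) x = P2 i x"
    using sph_harm_onb_harmonic_polys[OF assms(4)] by blast
  define n1 N where "n1 = length fs1" and "N = length fs1 + length fs2"
  define Q where "Q i = (if i < n1 then (\<lambda>x. c1 * P1 i x)
    else if i < N then (\<lambda>x. c2 * P2 (i - n1) x) else (\<lambda>x. 0))" for i
  have "eigenmap_join (m + 1) N n1 k1 k2 Q (pair_map c1 fs1 c2 fs2)"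
  proof (rule eigenmap_join.intro)
    show "harmonic_hom_poly (m + 1) (if i < n1 then k1 else k2) (Q i)" for i
      using harmonic_hom_poly_const_mult[OF P1] harmonic_hom_poly_const_mult[OF P2] harmonic_hom_poly_zero
      by (simp add: Q_def)
    show "(\<Sum>i<n1. (Q i x)\<^sup>2) = ip (m + 1) x x ^ k1 / 2" for x
      using sum_squares_extend[OF P1 _ fs1 assms(6)] by (simp add: Q_def n1_def)
    show "(\<Sum>i\<in>{n1..<N}. (Q i x)\<^sup>2) = ip (m + 1) x x ^ k2 / 2" for x
      using sum.shift_bounds_nat_ivl[of "\<lambda>i. (Q i x)\<^sup>2" 0 n1 "length fs2"] sum_squares_extend[OF P2 _ fs2 assms(8)]
      by (simp add: Q_def N_def n1_def atLeast0LessThan add.commute)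
  qed (use assms(1,2) in \<open>auto simp: Q_def N_def n1_def pair_map_def fs1 fs2\<close>)
  then show ?thesis
    using eigenmap_join.proper_biharmonic by (simp add: N_def n1_def)
qed

end
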